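(* For all $n\ge1$, $$a_{\{0101,0102,0112,0120\}}(n)=a_{\{0101,0102,0112,0121\}}(n)=a_{\{0101,0112,0120,0121\}}(n)=1+\binom{n+1}{3}.$$
   Context: An ascent in an integer sequence $s_1\cdots s_m$ is an index $j$ with $s_j<s_{j+1}$; $\mathrm{asc}$ denotes the number of ascents. An ascent sequence is a sequence $x_1\cdots x_n$ of nonnegative integers with $x_1=0$ and $x_i\le 1+\mathrm{asc}(x_1\cdots x_{i-1})$ for all $i\ge2$. The reduction $\mathrm{red}(w)$ of an integer sequence $w$ replaces the $i$-th smallest distinct letter of $w$ by $i-1$; a pattern is a reduced sequence. A sequence $x$ contains a pattern $p=p_1\cdots p_k$ if there are indices $i_1<\cdots<i_k$ with $\mathrm{red}(x_{i_1}\cdots x_{i_k})=p$; otherwise $x$ avoids $p$. For a finite set $P$ of patterns, $a_P(n)$ denotes the number of ascent sequences of length $n$ avoiding every pattern in $P$. *)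

theory Defs
  imports Main
begin

definition asc :: "nat list \<Rightarrow> nat" where
  "asc s = card {j. Suc j < length s \<and> s ! j < s ! Suc j}"

(* ascent sequences: x_1 = 0 and x_i \<le> 1 + asc(x_1...x_{i-1}) for i \<ge> 2
   (0-indexed: x!0 = 0 and x!i \<le> 1 + asc (take i x) for 1 \<le> i < length x) *)
definition ascent_seq :: "nat list \<Rightarrow> bool" where
  "ascent_seq x \<longleftrightarrow> x \<noteq> [] \<and> x ! 0 = 0 \<and>
     (\<forall>i. 1 \<le> i \<and> i < length x \<longrightarrow> x ! i \<le> 1 + asc (take i x))"

definition red :: "nat list \<Rightarrow> nat list" where
  "red w = map (\<lambda>v. card {u \<in> set w. u < v}) w"

definition contains :: "nat list \<Rightarrow> nat list \<Rightarrow> bool" where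
  "contains x p \<longleftrightarrow> (\<exists>is. sorted_wrt (<) is \<and> length is = length p \<and>
      (\<forall>i\<in>set is. i < length x) \<and> red (map (\<lambda>i. x ! i) is) = p)"

definition avoids :: "nat list \<Rightarrow> nat list \<Rightarrow> bool" where
  "avoids x p \<longleftrightarrow> \<not> contains x p"

definition a_P :: "nat list set \<Rightarrow> nat \<Rightarrow> nat" where
  "a_P P n = card {x. ascent_seq x \<and> length x = n \<and> (\<forall>p\<in>P. avoids x p)}"

end

theory Submission
  imports Defs
begin

(* Each of the three pattern sets P forces every P-avoiding ascent sequence of length n other
   than 0^n into an explicit family of sequences indexed injectively by the triples
   i < j < l <= n, of which there are C(n+1, 3). Avoiders are closed under deleting the last
   letter, so the classification goes by induction on n: appending a letter v <= 1 + asc x to a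
   member x of the family either gives a member of the family of length n + 1 or creates one of
   the forbidden patterns. *)

section \<open>Occurrences of patterns of length four\<close>

lemma red_less_iff:
  assumes "red w = p" "a < length w" "b < length w"
  shows "w ! a < w ! b \<longleftrightarrow> p ! a < p ! b"
proof -
  have p_nth: "p ! k = card {u \<in> set w. u < w ! k}" if "k < length w" for k
    using assms(1) that unfolding red_def by auto
  have mono_strict: "card {u \<in> set w. u < x} < card {u \<in> set w. u < y}" if "x < y" "x \<in> set w" for x y
    by (rule psubset_card_mono) (use that in auto)
  have mono: "card {u \<in> set w. u < x} \<le> card {u \<in> set w. u < y}" if "x \<le> y" for x y
    by (rule card_mono) (use that in auto)
  show ?thesis
    using mono_strict[of "w ! a" "w ! b"] mono[of "w ! b" "w ! a"] assms(2,3)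
    unfolding p_nth[OF assms(2)] p_nth[OF assms(3)] by fastforce
qed

lemma red_two_letters:
  assumes "a < b" "set w = {a, b}"
  shows "red w = map (\<lambda>v. if v = a then 0 else 1) w"
proof -
  have "{u \<in> {a, b}. u < v} = (if v = a then {} else {a})" if "v \<in> {a, b}" for v
    using assms(1) that by auto
  then show ?thesis
    unfolding red_def assms(2) using assms(1) by (intro map_cong) (auto simp: assms(2))
qed

lemma red_three_letters:
  assumes "a < b" "b < c" "set w = {a, b, c}"
  shows "red w = map (\<lambda>v. if v = a then 0 else if v = b then 1 else 2) w"
proof -
  have "{u \<in> {a, b, c}. u < v} = (if v = a then {} else if v = b then {a} else {a, b})"
    if "v \<in> {a, b, c}" for v
    using assms(1,2) that by auto
  then show ?thesis
    unfolding red_def assms(3) using assms(1,2) by (intro map_cong) (auto simp: assms(3))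
qed

lemma contains_snoc_length4I:
  assumes "i1 < i2" "i2 < i3" "i3 < n" "red [f i1, f i2, f i3, v] = p"
  shows "contains (map f [0..<n] @ [v]) p"
  unfolding contains_def
  by (rule exI[of _ "[i1, i2, i3, n]"]) (use assms in \<open>auto simp: nth_append red_def\<close>)

lemma contains_snoc_0101I:
  assumes "i1 < i2" "i2 < i3" "i3 < n" "f i1 < f i2" "f i3 = f i1" "v = f i2"
  shows "contains (map f [0..<n] @ [v]) [0,1,0,1]"
  by (rule contains_snoc_length4I[OF assms(1-3)])
    (use assms(4-6) red_two_letters[of "f i1" "f i2" "[f i1, f i2, f i1, f i2]"] in auto)

lemma contains_snoc_0102I:
  assumes "i1 < i2" "i2 < i3" "i3 < n" "f i1 < f i2" "f i3 = f i1" "f i2 < v"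
  shows "contains (map f [0..<n] @ [v]) [0,1,0,2]"
  by (rule contains_snoc_length4I[OF assms(1-3)])
    (use assms(4-6) red_three_letters[of "f i1" "f i2" v "[f i1, f i2, f i1, v]"] in auto)

lemma contains_snoc_0112I:
  assumes "i1 < i2" "i2 < i3" "i3 < n" "f i1 < f i2" "f i3 = f i2" "f i2 < v"
  shows "contains (map f [0..<n] @ [v]) [0,1,1,2]"
  by (rule contains_snoc_length4I[OF assms(1-3)])
    (use assms(4-6) red_three_letters[of "f i1" "f i2" v "[f i1, f i2, f i2, v]"] in auto)

lemma contains_snoc_0120I:
  assumes "i1 < i2" "i2 < i3" "i3 < n" "f i1 < f i2" "f i2 < f i3" "v = f i1"
  shows "contains (map f [0..<n] @ [v]) [0,1,2,0]"
  by (rule contains_snoc_length4I[OF assms(1-3)])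
    (use assms(4-6) red_three_letters[of "f i1" "f i2" "f i3" "[f i1, f i2, f i3, f i1]"] in auto)

lemma contains_snoc_0121I:
  assumes "i1 < i2" "i2 < i3" "i3 < n" "f i1 < f i2" "f i2 < f i3" "v = f i2"
  shows "contains (map f [0..<n] @ [v]) [0,1,2,1]"
  by (rule contains_snoc_length4I[OF assms(1-3)])
    (use assms(4-6) red_three_letters[of "f i1" "f i2" "f i3" "[f i1, f i2, f i3, f i2]"] in auto)

lemma contains_length4E:
  assumes "contains y p" "length p = 4"
  obtains i1 i2 i3 i4 where "i1 < i2" "i2 < i3" "i3 < i4" "i4 < length y"
    "red [y ! i1, y ! i2, y ! i3, y ! i4] = p"
proof -
  obtain ix where ix: "sorted_wrt (<) ix" "length ix = 4" "\<forall>i\<in>set ix. i < length y"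
      "red (map (\<lambda>i. y ! i) ix) = p"
    using assms unfolding contains_def by auto
  from ix(2) obtain i1 i2 i3 i4 where "ix = [i1, i2, i3, i4]"
    by (auto simp: numeral_eq_Suc length_Suc_conv)
  with ix show thesis by (intro that) auto
qed

lemma avoids_map_upt_length4I:
  assumes "length p = 4"
    and "\<And>i1 i2 i3 i4. i1 < i2 \<Longrightarrow> i2 < i3 \<Longrightarrow> i3 < i4 \<Longrightarrow> i4 < n \<Longrightarrow>
      \<forall>a<4. \<forall>b<4. [f i1, f i2, f i3, f i4] ! a < [f i1, f i2, f i3, f i4] ! b \<longleftrightarrow> p ! a < p ! b
      \<Longrightarrow> False"
  shows "avoids (map f [0..<n]) p"
  unfolding avoids_def
proof
  assume "contains (map f [0..<n]) p"
  then obtain i1 i2 i3 i4 where idx: "i1 < i2" "i2 < i3" "i3 < i4" "i4 < n"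
      and "red [f i1, f i2, f i3, f i4] = p"
    using assms(1) by (elim contains_length4E) auto
  then have "\<forall>a<4. \<forall>b<4. [f i1, f i2, f i3, f i4] ! a < [f i1, f i2, f i3, f i4] ! b \<longleftrightarrow> p ! a < p ! b"
    using red_less_iff by auto
  then show False using assms(2)[OF idx] by blast
qed

lemma avoids_0101I:
  assumes "\<And>i1 i2 i3 i4. i1 < i2 \<Longrightarrow> i2 < i3 \<Longrightarrow> i3 < i4 \<Longrightarrow> i4 < n \<Longrightarrow>
    f i1 < f i2 \<Longrightarrow> f i3 = f i1 \<Longrightarrow> f i4 = f i2 \<Longrightarrow> False"
  shows "avoids (map f [0..<n]) [0,1,0,1]"
  by (rule avoids_map_upt_length4I, simp, rule assms, assumption+)
    (simp_all add: numeral_eq_Suc All_less_Suc)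

lemma avoids_0102I:
  assumes "\<And>i1 i2 i3 i4. i1 < i2 \<Longrightarrow> i2 < i3 \<Longrightarrow> i3 < i4 \<Longrightarrow> i4 < n \<Longrightarrow>
    f i1 < f i2 \<Longrightarrow> f i3 = f i1 \<Longrightarrow> f i2 < f i4 \<Longrightarrow> False"
  shows "avoids (map f [0..<n]) [0,1,0,2]"
  by (rule avoids_map_upt_length4I, simp, rule assms, assumption+)
    (simp_all add: numeral_eq_Suc All_less_Suc)

lemma avoids_0112I:
  assumes "\<And>i1 i2 i3 i4. i1 < i2 \<Longrightarrow> i2 < i3 \<Longrightarrow> i3 < i4 \<Longrightarrow> i4 < n \<Longrightarrow>
    f i1 < f i2 \<Longrightarrow> f i3 = f i2 \<Longrightarrow> f i2 < f i4 \<Longrightarrow> False"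
  shows "avoids (map f [0..<n]) [0,1,1,2]"
  by (rule avoids_map_upt_length4I, simp, rule assms, assumption+)
    (simp_all add: numeral_eq_Suc All_less_Suc)

lemma avoids_0120I:
  assumes "\<And>i1 i2 i3 i4. i1 < i2 \<Longrightarrow> i2 < i3 \<Longrightarrow> i3 < i4 \<Longrightarrow> i4 < n \<Longrightarrow>
    f i1 < f i2 \<Longrightarrow> f i2 < f i3 \<Longrightarrow> f i4 = f i1 \<Longrightarrow> False"
  shows "avoids (map f [0..<n]) [0,1,2,0]"
  by (rule avoids_map_upt_length4I, simp, rule assms, assumption+)
    (simp_all add: numeral_eq_Suc All_less_Suc)

lemma avoids_0121I:
  assumes "\<And>i1 i2 i3 i4. i1 < i2 \<Longrightarrow> i2 < i3 \<Longrightarrow> i3 < i4 \<Longrightarrow> i4 < n \<Longrightarrow>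
    f i1 < f i2 \<Longrightarrow> f i2 < f i3 \<Longrightarrow> f i4 = f i2 \<Longrightarrow> False"
  shows "avoids (map f [0..<n]) [0,1,2,1]"
  by (rule avoids_map_upt_length4I, simp, rule assms, assumption+)
    (simp_all add: numeral_eq_Suc All_less_Suc)

lemma contains_append:
  assumes "contains x p"
  shows "contains (x @ y) p"
proof -
  obtain ix where ix: "sorted_wrt (<) ix" "length ix = length p" "\<forall>i\<in>set ix. i < length x"
      "red (map (\<lambda>i. x ! i) ix) = p"
    using assms unfolding contains_def by auto
  have same: "map (\<lambda>i. (x @ y) ! i) ix = map (\<lambda>i. x ! i) ix"
    using ix(3) by (auto simp: nth_append)
  show ?thesis
    unfolding contains_def by (intro exI[of _ ix]) (simp only: same, use ix in auto)
qed

lemma contains_replicate_0D: "contains (replicate n 0) p \<Longrightarrow> set p \<subseteq> {0}"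
  unfolding contains_def red_def by auto

lemma asc_map_upt: "asc (map f [0..<n]) = card {q. Suc q < n \<and> f q < f (Suc q)}"
  unfolding asc_def by (rule arg_cong[where f = card]) auto

lemma card_le_asc_map_upt:
  assumes "\<And>q. q \<in> S \<Longrightarrow> Suc q < n \<and> f q < f (Suc q)"
  shows "card S \<le> asc (map f [0..<n])"
  unfolding asc_map_upt
  by (rule card_mono) (use assms in \<open>auto intro: finite_subset[of _ "{..<n}"]\<close>)

lemma asc_map_upt_le_card:
  assumes "\<And>q. Suc q < n \<Longrightarrow> f q < f (Suc q) \<Longrightarrow> q \<in> S" "finite S"
  shows "asc (map f [0..<n]) \<le> card S"
  unfolding asc_map_upt by (rule card_mono) (use assms in auto)

lemma asc_replicate_0: "asc (replicate n 0) = 0"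
  unfolding asc_def by (auto simp: card_eq_0_iff)

lemma ascent_seq_map_uptI:
  assumes "f 0 = 0" "1 \<le> n" "\<And>p. 1 \<le> p \<Longrightarrow> p < n \<Longrightarrow> f p \<le> 1 + asc (map f [0..<p])"
  shows "ascent_seq (map f [0..<n])"
  unfolding ascent_seq_def using assms by (auto simp: take_map)

lemma ascent_seq_snocD:
  assumes "ascent_seq (x @ [v])" "x \<noteq> []"
  shows "ascent_seq x" "v \<le> 1 + asc x"
proof -
  have first: "(x @ [v]) ! 0 = 0"
    and bound: "\<And>i. 1 \<le> i \<Longrightarrow> i \<le> length x \<Longrightarrow> (x @ [v]) ! i \<le> 1 + asc (take i (x @ [v]))"
    using assms(1) unfolding ascent_seq_def by auto
  show "ascent_seq x"
    unfolding ascent_seq_def using assms(2) first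
  proof (auto simp: nth_append)
    fix i assume "Suc 0 \<le> i" "i < length x"
    then show "x ! i \<le> Suc (asc (take i x))"
      using bound[of i] by (simp add: nth_append)
  qed
  show "v \<le> 1 + asc x"
    using assms(2) bound[of "length x"] by (simp add: Suc_leI)
qed

section \<open>Counting avoiders through a family indexed by triples\<close>

lemma card_pairs_less: "card {(i :: nat, j). i < j \<and> j < m} = m choose 2"
proof (induction m)
  case (Suc m)
  have split: "{(i, j). i < j \<and> j < Suc m} = {(i, j). i < j \<and> j < m} \<union> (\<lambda>i. (i, m)) ` {..<m}"
    by auto
  have "finite {(i :: nat, j). i < j \<and> j < m}"
    by (rule finite_subset[of _ "{..<m} \<times> {..<m}"]) auto
  then have "card {(i :: nat, j). i < j \<and> j < Suc m} = (m choose 2) + m"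
    unfolding split using Suc by (subst card_Un_disjoint) (auto simp: card_image inj_on_def)
  then show ?case by (simp add: numeral_2_eq_2)
qed simp

lemma card_triples_less: "card {(i :: nat, j, l). i < j \<and> j < l \<and> l < m} = m choose 3"
proof (induction m)
  case (Suc m)
  have split: "{(i, j, l). i < j \<and> j < l \<and> l < Suc m} =
      {(i, j, l). i < j \<and> j < l \<and> l < m} \<union> (\<lambda>(i, j). (i, j, m)) ` {(i, j). i < j \<and> j < m}"
    by (auto simp: less_Suc_eq image_iff)
  have "finite {(i :: nat, j, l). i < j \<and> j < l \<and> l < m}"
    by (rule finite_subset[of _ "{..<m} \<times> {..<m} \<times> {..<m}"]) auto
  moreover have "finite {(i :: nat, j). i < j \<and> j < m}"
    by (rule finite_subset[of _ "{..<m} \<times> {..<m}"]) auto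
  moreover have "inj_on (\<lambda>(i, j). (i :: nat, j :: nat, m)) {(i, j). i < j \<and> j < m}"
    by (auto simp: inj_on_def)
  ultimately have "card {(i :: nat, j, l). i < j \<and> j < l \<and> l < Suc m} = (m choose 3) + (m choose 2)"
    unfolding split using Suc card_pairs_less
    by (subst card_Un_disjoint) (auto simp: card_image)
  then show ?case by (simp add: numeral_3_eq_3 numeral_2_eq_2)
qed simp

definition triples :: "nat \<Rightarrow> (nat \<times> nat \<times> nat) set" where
  "triples n = {(i, j, l). i < j \<and> j < l \<and> l \<le> n}"

lemma finite_triples: "finite (triples n)"
  unfolding triples_def by (rule finite_subset[of _ "{..n} \<times> {..n} \<times> {..n}"]) auto

lemma card_triples: "card (triples n) = (n + 1) choose 3"
proof -
  have "triples n = {(i, j, l). i < j \<and> j < l \<and> l < Suc n}"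
    unfolding triples_def by auto
  then show ?thesis using card_triples_less by simp
qed

definition avoiders :: "nat list set \<Rightarrow> nat \<Rightarrow> nat list set" where
  "avoiders P n = {x. ascent_seq x \<and> length x = n \<and> (\<forall>p\<in>P. avoids x p)}"

definition family :: "(nat \<Rightarrow> nat \<Rightarrow> nat \<Rightarrow> nat \<Rightarrow> nat \<Rightarrow> nat) \<Rightarrow> nat \<Rightarrow> nat list set" where
  "family s n = (\<lambda>(i, j, l). map (s n i j l) [0..<n]) ` triples n"

lemma snoc_mem_family:
  assumes "(i, j, l) \<in> triples (Suc n)"
    and "\<And>p. p < n \<Longrightarrow> f p = s (Suc n) i j l p" "v = s (Suc n) i j l n"
  shows "map f [0..<n] @ [v] \<in> family s (Suc n)"
proof -
  have "map f [0..<n] @ [v] = map (s (Suc n) i j l) [0..<Suc n]"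
    using assms(2,3) by simp
  with assms(1) show ?thesis
    unfolding family_def by (auto intro: image_eqI[where x = "(i, j, l)"])
qed

lemma avoiders_snocD:
  assumes "x @ [v] \<in> avoiders P (Suc n)" "1 \<le> n"
  shows "x \<in> avoiders P n" "v \<le> 1 + asc x"
proof -
  have "x \<noteq> []" using assms by (auto simp: avoiders_def)
  with assms(1) show "x \<in> avoiders P n" "v \<le> 1 + asc x"
    unfolding avoiders_def avoids_def by (auto dest: ascent_seq_snocD contains_append)
qed

lemma replicate_0_mem_avoiders:
  assumes "\<And>p. p \<in> P \<Longrightarrow> 1 \<in> set p" "1 \<le> n"
  shows "replicate n 0 \<in> avoiders P n"
  using assms contains_replicate_0D unfolding avoiders_def avoids_def ascent_seq_def by fastforce

lemma avoiders_1_subset: "avoiders P 1 \<subseteq> {[0]}"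
proof
  fix y assume "y \<in> avoiders P 1"
  then obtain a where "y = [a]" "a = 0"
    by (auto simp: avoiders_def ascent_seq_def length_Suc_conv)
  then show "y \<in> {[0]}" by simp
qed

lemma replicate_0_snoc_1_mem_family:
  assumes "map (s (Suc n) (n - 1) n (Suc n)) [0..<Suc n] = replicate n 0 @ [1]" "1 \<le> n"
  shows "replicate n 0 @ [1] \<in> family s (Suc n)"
proof -
  have "(n - 1, n, Suc n) \<in> triples (Suc n)" using assms(2) by (auto simp: triples_def)
  then show ?thesis
    unfolding family_def assms(1)[symmetric] by (rule rev_image_eqI) simp
qed

lemma avoiders_eq_family:
  assumes nonconstant: "\<And>p. p \<in> P \<Longrightarrow> 1 \<in> set p"
    and members: "\<And>n i j l. (i, j, l) \<in> triples n \<Longrightarrow> map (s n i j l) [0..<n] \<in> avoiders P n"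
    and start: "\<And>n. 1 \<le> n \<Longrightarrow> map (s (Suc n) (n - 1) n (Suc n)) [0..<Suc n] = replicate n 0 @ [1]"
    and extend: "\<And>n i j l v. (i, j, l) \<in> triples n \<Longrightarrow> v \<le> 1 + asc (map (s n i j l) [0..<n]) \<Longrightarrow>
      \<forall>p\<in>P. avoids (map (s n i j l) [0..<n] @ [v]) p \<Longrightarrow>
      map (s n i j l) [0..<n] @ [v] \<in> family s (Suc n)"
    and "1 \<le> n"
  shows "avoiders P n = insert (replicate n 0) (family s n)"
proof
  show "insert (replicate n 0) (family s n) \<subseteq> avoiders P n"
    using replicate_0_mem_avoiders[OF nonconstant \<open>1 \<le> n\<close>] members
    unfolding family_def by auto
  show "avoiders P n \<subseteq> insert (replicate n 0) (family s n)"
    using \<open>1 \<le> n\<close>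
  proof (induction n rule: dec_induct)
    case base
    show ?case using avoiders_1_subset by auto
  next
    case (step n)
    show ?case
    proof
      fix y assume y: "y \<in> avoiders P (Suc n)"
      then have "length y = Suc n" by (simp add: avoiders_def)
      then obtain x v where y_eq: "y = x @ [v]"
        by (auto simp: length_Suc_conv_rev)
      have x: "x \<in> avoiders P n" and v: "v \<le> 1 + asc x"
        using avoiders_snocD[OF y[unfolded y_eq] \<open>1 \<le> n\<close>] by auto
      have avoid: "\<forall>p\<in>P. avoids (x @ [v]) p"
        using y unfolding y_eq avoiders_def by auto
      from x step.IH consider "x = replicate n 0" | "x \<in> family s n" by auto
      then show "y \<in> insert (replicate (Suc n) 0) (family s (Suc n))"
      proof cases
        case 1
        then have "v = 0 \<or> v = 1" using v asc_replicate_0 by auto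
        then show ?thesis
          using 1 replicate_0_snoc_1_mem_family[where s = s, OF start[OF \<open>1 \<le> n\<close>] \<open>1 \<le> n\<close>]
          unfolding y_eq by (auto simp: replicate_append_same)
      next
        case 2
        then obtain i j l where "(i, j, l) \<in> triples n" "x = map (s n i j l) [0..<n]"
          unfolding family_def by auto
        then show ?thesis
          using extend v avoid unfolding y_eq by blast
      qed
    qed
  qed
qed

lemma card_family:
  assumes "\<And>i j l i' j' l'. (i, j, l) \<in> triples n \<Longrightarrow> (i', j', l') \<in> triples n \<Longrightarrow>
      (\<And>p. p < n \<Longrightarrow> s n i j l p = s n i' j' l' p) \<Longrightarrow> (i, j, l) = (i', j', l')"
  shows "card (family s n) = (n + 1) choose 3"
proof -
  have "inj_on (\<lambda>(i, j, l). map (s n i j l) [0..<n]) (triples n)"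
  proof (rule inj_onI)
    fix t t' assume "t \<in> triples n" "t' \<in> triples n"
      and "(\<lambda>(i, j, l). map (s n i j l) [0..<n]) t = (\<lambda>(i, j, l). map (s n i j l) [0..<n]) t'"
    moreover obtain i j l i' j' l' where "t = (i, j, l)" "t' = (i', j', l')"
      by (cases t, cases t') auto
    ultimately show "t = t'"
      using assms[of i j l i' j' l'] by (simp add: map_eq_conv)
  qed
  then show ?thesis unfolding family_def by (simp add: card_image card_triples)
qed

lemma replicate_0_notin_family:
  assumes "\<And>i j l. (i, j, l) \<in> triples n \<Longrightarrow> s n i j l (Suc i) \<noteq> 0"
  shows "replicate n 0 \<notin> family s n"
proof
  assume "replicate n 0 \<in> family s n"
  then obtain i j l where t: "(i, j, l) \<in> triples n" and "map (s n i j l) [0..<n] = replicate n 0"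
    unfolding family_def by auto
  moreover have "Suc i < n" using t by (auto simp: triples_def)
  ultimately have "s n i j l (Suc i) = 0"
    by (metis add_0 diff_zero nth_map_upt nth_replicate)
  with assms t show False by blast
qed

lemma a_P_eq_by_family:
  assumes "\<And>p. p \<in> P \<Longrightarrow> 1 \<in> set p"
    and "\<And>n i j l. (i, j, l) \<in> triples n \<Longrightarrow> map (s n i j l) [0..<n] \<in> avoiders P n"
    and "\<And>n. 1 \<le> n \<Longrightarrow> map (s (Suc n) (n - 1) n (Suc n)) [0..<Suc n] = replicate n 0 @ [1]"
    and "\<And>n i j l v. (i, j, l) \<in> triples n \<Longrightarrow> v \<le> 1 + asc (map (s n i j l) [0..<n]) \<Longrightarrow>
      \<forall>p\<in>P. avoids (map (s n i j l) [0..<n] @ [v]) p \<Longrightarrow>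
      map (s n i j l) [0..<n] @ [v] \<in> family s (Suc n)"
    and "\<And>n i j l i' j' l'. (i, j, l) \<in> triples n \<Longrightarrow> (i', j', l') \<in> triples n \<Longrightarrow>
      (\<And>p. p < n \<Longrightarrow> s n i j l p = s n i' j' l' p) \<Longrightarrow> (i, j, l) = (i', j', l')"
    and "\<And>n i j l. (i, j, l) \<in> triples n \<Longrightarrow> s n i j l (Suc i) \<noteq> 0"
    and "1 \<le> n"
  shows "a_P P n = 1 + ((n + 1) choose 3)"
proof -
  have "avoiders P n = insert (replicate n 0) (family s n)"
    by (rule avoiders_eq_family[where s = s]) (fact assms)+
  then have "a_P P n = card (insert (replicate n 0) (family s n))"
    unfolding a_P_def avoiders_def by simp
  also have "\<dots> = 1 + ((n + 1) choose 3)"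
    using replicate_0_notin_family[of n s, OF assms(6)] card_family[of n s, OF assms(5)]
    by (simp add: family_def finite_triples)
  finally show ?thesis .
qed

section \<open>Staircases\<close>

(* staircase i j l c = 0^(i+1) 1 2 ... (j-i) (j-i) ... (j-i) c c ..., the plateau at height
   j - i ending at position l - 1; for l = n the letter c does not occur. *)
definition staircase :: "nat \<Rightarrow> nat \<Rightarrow> nat \<Rightarrow> nat \<Rightarrow> nat \<Rightarrow> nat" where
  "staircase i j l c p = (if p \<le> i then 0 else if p < l then min p j - i else c)"

lemma staircase_Suc: "i < j \<Longrightarrow> j < l \<Longrightarrow> staircase i j l c (Suc i) = 1"
  by (simp add: staircase_def)

lemma map_staircase_first_step:
  assumes "1 \<le> n"
  shows "map (staircase (n - 1) n (Suc n) c) [0..<Suc n] = replicate n 0 @ [1]"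
proof -
  have "map (staircase (n - 1) n (Suc n) c) [0..<n] = map (\<lambda>_. 0) [0..<n]"
    by (rule map_cong) (auto simp: staircase_def)
  with assms show ?thesis by (simp add: staircase_def map_replicate_const)
qed

lemma ascent_seq_staircase:
  assumes "i < j" "j < l" "l \<le> n" "c \<le> j - i"
  shows "ascent_seq (map (staircase i j l c) [0..<n])"
proof (rule ascent_seq_map_uptI)
  fix p assume p: "1 \<le> p" "p < n"
  show "staircase i j l c p \<le> 1 + asc (map (staircase i j l c) [0..<p])"
  proof (cases "p \<le> i")
    case False
    have "card {i..<min p j - 1} \<le> asc (map (staircase i j l c) [0..<p])"
      by (rule card_le_asc_map_upt) (use assms False in \<open>auto simp: staircase_def\<close>)
    then show ?thesis using False assms by (auto simp: staircase_def)
  qed (simp add: staircase_def)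
qed (use assms in \<open>auto simp: staircase_def\<close>)

lemma asc_staircase_le:
  assumes "i < j" "j < l" "l \<le> n" "c \<le> j - i"
  shows "asc (map (staircase i j l c) [0..<n]) \<le> j - i"
proof -
  have "asc (map (staircase i j l c) [0..<n]) \<le> card {i..<j}"
    by (rule asc_map_upt_le_card) (use assms in \<open>auto simp: staircase_def split: if_splits\<close>)
  then show ?thesis by simp
qed

lemma staircase_eq_imp_eq:
  assumes "(i, j, l) \<in> triples n" "(i', j', l') \<in> triples n" "c < j - i" "c' < j' - i'"
    and eq: "\<And>p. p < n \<Longrightarrow> staircase i j l c p = staircase i' j' l' c' p"
  shows "(i, j, l) = (i', j', l')"
proof -
  have o: "i < j" "j < l" "l \<le> n" "i' < j'" "j' < l'" "l' \<le> n"
    using assms(1,2) by (auto simp: triples_def)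
  have "i = i'"
    using eq[of "Suc i"] eq[of "Suc i'"] o by (auto simp: staircase_def split: if_splits)
  moreover have "j = j'"
  proof (rule ccontr)
    assume "j \<noteq> j'"
    then obtain k where k: "k = min j j'" "Suc k < n" "Suc k < max l l'" "Suc k \<le> max j j'"
      using o by (auto simp: min_def max_def)
    then show False
      using eq[of "Suc k"] o \<open>i = i'\<close> \<open>j \<noteq> j'\<close> assms(3,4)
      by (auto simp: staircase_def min_def split: if_splits)
  qed
  moreover have "l = l'"
  proof (rule ccontr)
    assume "l \<noteq> l'"
    then show False
      using eq[of "min l l'"] o \<open>i = i'\<close> \<open>j = j'\<close> assms(3,4)
      by (cases "l < l'") (auto simp: staircase_def min_def)
  qed
  ultimately show ?thesis by simp
qed

section \<open>The pattern sets without 0121 and without 0120\<close>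

abbreviation P1 :: "nat list set" where
  "P1 \<equiv> {[0,1,0,1], [0,1,0,2], [0,1,1,2], [0,1,2,0]}"

lemma staircase_pred_mem_avoiders:
  assumes "(i, j, l) \<in> triples n"
  shows "map (staircase i j l (j - i - 1)) [0..<n] \<in> avoiders P1 n"
proof -
  have o: "i < j" "j < l" "l \<le> n" using assms by (auto simp: triples_def)
  have "avoids (map (staircase i j l (j - i - 1)) [0..<n]) [0,1,0,1]"
    by (rule avoids_0101I) (use o in \<open>auto simp: staircase_def min_def split: if_splits\<close>)
  moreover have "avoids (map (staircase i j l (j - i - 1)) [0..<n]) [0,1,0,2]"
    by (rule avoids_0102I) (use o in \<open>auto simp: staircase_def min_def split: if_splits\<close>)
  moreover have "avoids (map (staircase i j l (j - i - 1)) [0..<n]) [0,1,1,2]"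
    by (rule avoids_0112I) (use o in \<open>auto simp: staircase_def min_def split: if_splits\<close>)
  moreover have "avoids (map (staircase i j l (j - i - 1)) [0..<n]) [0,1,2,0]"
    by (rule avoids_0120I) (use o in \<open>auto simp: staircase_def min_def split: if_splits\<close>)
  ultimately show ?thesis
    using ascent_seq_staircase[OF o] unfolding avoiders_def by auto
qed

lemma staircase_pred_snoc_mem_family:
  assumes t: "(i, j, l) \<in> triples n"
    and v: "v \<le> 1 + asc (map (staircase i j l (j - i - 1)) [0..<n])"
    and avoid: "\<forall>p\<in>P1. avoids (map (staircase i j l (j - i - 1)) [0..<n] @ [v]) p"
  shows "map (staircase i j l (j - i - 1)) [0..<n] @ [v] \<in>
    family (\<lambda>_ i j l. staircase i j l (j - i - 1)) (Suc n)"
    (is "?x @ [v] \<in> family ?s (Suc n)")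
proof -
  have o: "i < j" "j < l" "l \<le> n" using t by (auto simp: triples_def)
  note extend = snoc_mem_family[where s = ?s and f = "staircase i j l (j - i - 1)" and v = v]
  have nc: "\<not> contains (?x @ [v]) p" if "p \<in> P1" for p
    using avoid that unfolding avoids_def by auto
  have "asc ?x \<le> j - i" by (rule asc_staircase_le[OF o]) simp
  with v o consider "v = j - i + 1" "l = n" "l = j + 1" | "v = j - i + 1" "l = n" "l \<noteq> j + 1"
    | "v = j - i + 1" "l < n" | "v = j - i" "l = n" | "v = j - i" "l < n" | "v = j - i - 1"
    | "v + 2 \<le> j - i"
    by linarith
  then show ?thesis
  proof cases
    case 1
    show ?thesis
      by (rule extend[of i "j + 1" "Suc n"]) (use o 1 in \<open>auto simp: triples_def staircase_def\<close>)
  next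
    case 2
    have "contains (?x @ [v]) [0,1,1,2]"
      by (rule contains_snoc_0112I[of i j "j + 1"]) (use o 2 in \<open>auto simp: staircase_def\<close>)
    with nc show ?thesis by auto
  next
    case 3
    have "contains (?x @ [v]) [0,1,0,2]"
      by (rule contains_snoc_0102I[of "j - 1" j "n - 1"]) (use o 3 in \<open>auto simp: staircase_def\<close>)
    with nc show ?thesis by auto
  next
    case 4
    show ?thesis
      by (rule extend[of i j "Suc n"]) (use o 4 in \<open>auto simp: triples_def staircase_def\<close>)
  next
    case 5
    have "contains (?x @ [v]) [0,1,0,1]"
      by (rule contains_snoc_0101I[of "j - 1" j "n - 1"]) (use o 5 in \<open>auto simp: staircase_def\<close>)
    with nc show ?thesis by auto
  next
    case 6
    show ?thesis
      by (rule extend[of i j l]) (use o 6 in \<open>auto simp: triples_def staircase_def\<close>)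
  next
    case 7
    have "contains (?x @ [v]) [0,1,2,0]"
      by (rule contains_snoc_0120I[of "i + v" "i + v + 1" j]) (use o 7 in \<open>auto simp: staircase_def\<close>)
    with nc show ?thesis by auto
  qed
qed

abbreviation P2 :: "nat list set" where
  "P2 \<equiv> {[0,1,0,1], [0,1,0,2], [0,1,1,2], [0,1,2,1]}"

lemma staircase_zero_mem_avoiders:
  assumes "(i, j, l) \<in> triples n"
  shows "map (staircase i j l 0) [0..<n] \<in> avoiders P2 n"
proof -
  have o: "i < j" "j < l" "l \<le> n" using assms by (auto simp: triples_def)
  have "avoids (map (staircase i j l 0) [0..<n]) [0,1,0,1]"
    by (rule avoids_0101I) (use o in \<open>auto simp: staircase_def min_def split: if_splits\<close>)
  moreover have "avoids (map (staircase i j l 0) [0..<n]) [0,1,0,2]"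
    by (rule avoids_0102I) (use o in \<open>auto simp: staircase_def min_def split: if_splits\<close>)
  moreover have "avoids (map (staircase i j l 0) [0..<n]) [0,1,1,2]"
    by (rule avoids_0112I) (use o in \<open>auto simp: staircase_def min_def split: if_splits\<close>)
  moreover have "avoids (map (staircase i j l 0) [0..<n]) [0,1,2,1]"
    by (rule avoids_0121I) (use o in \<open>auto simp: staircase_def min_def split: if_splits\<close>)
  ultimately show ?thesis
    using ascent_seq_staircase[OF o] unfolding avoiders_def by auto
qed

lemma staircase_zero_snoc_mem_family:
  assumes t: "(i, j, l) \<in> triples n"
    and v: "v \<le> 1 + asc (map (staircase i j l 0) [0..<n])"
    and avoid: "\<forall>p\<in>P2. avoids (map (staircase i j l 0) [0..<n] @ [v]) p"
  shows "map (staircase i j l 0) [0..<n] @ [v] \<in> family (\<lambda>_ i j l. staircase i j l 0) (Suc n)"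
    (is "?x @ [v] \<in> family ?s (Suc n)")
proof -
  have o: "i < j" "j < l" "l \<le> n" using t by (auto simp: triples_def)
  note extend = snoc_mem_family[where s = ?s and f = "staircase i j l 0" and v = v]
  have nc: "\<not> contains (?x @ [v]) p" if "p \<in> P2" for p
    using avoid that unfolding avoids_def by auto
  have "asc ?x \<le> j - i" by (rule asc_staircase_le[OF o]) simp
  with v o consider "v = j - i + 1" "l = n" "l = j + 1" | "v = j - i + 1" "l = n" "l \<noteq> j + 1"
    | "v = j - i + 1" "l < n" | "v = j - i" "l = n" | "v = j - i" "l < n" | "v = 0"
    | "0 < v" "v < j - i"
    by linarith
  then show ?thesis
  proof cases
    case 1
    show ?thesis
      by (rule extend[of i "j + 1" "Suc n"]) (use o 1 in \<open>auto simp: triples_def staircase_def\<close>)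
  next
    case 2
    have "contains (?x @ [v]) [0,1,1,2]"
      by (rule contains_snoc_0112I[of i j "j + 1"]) (use o 2 in \<open>auto simp: staircase_def\<close>)
    with nc show ?thesis by auto
  next
    case 3
    have "contains (?x @ [v]) [0,1,0,2]"
      by (rule contains_snoc_0102I[of i j "n - 1"]) (use o 3 in \<open>auto simp: staircase_def\<close>)
    with nc show ?thesis by auto
  next
    case 4
    show ?thesis
      by (rule extend[of i j "Suc n"]) (use o 4 in \<open>auto simp: triples_def staircase_def\<close>)
  next
    case 5
    have "contains (?x @ [v]) [0,1,0,1]"
      by (rule contains_snoc_0101I[of i j "n - 1"]) (use o 5 in \<open>auto simp: staircase_def\<close>)
    with nc show ?thesis by auto
  next
    case 6
    show ?thesis
      by (rule extend[of i j l]) (use o 6 in \<open>auto simp: triples_def staircase_def\<close>)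
  next
    case 7
    have "contains (?x @ [v]) [0,1,2,1]"
      by (rule contains_snoc_0121I[of i "i + v" j]) (use o 7 in \<open>auto simp: staircase_def\<close>)
    with nc show ?thesis by auto
  qed
qed

section \<open>Spiked staircases and the pattern set without 0102\<close>

(* spiked_staircase i j l = 0^(i+1) 1 0^(l-j) 2 3 ... (j-i-1) (j-i) (j-i) ..., the letter j - i
   first occurring at position l. *)
definition spiked_staircase :: "nat \<Rightarrow> nat \<Rightarrow> nat \<Rightarrow> nat \<Rightarrow> nat" where
  "spiked_staircase i j l p =
    (if p \<le> i then 0 else if p = Suc i then 1 else if p \<le> i + 1 + l - j then 0
     else if p < l then p + j - i - l else j - i)"

lemma ascent_seq_spiked_staircase:
  assumes "Suc i < j" "j < l" "l < n"
  shows "ascent_seq (map (spiked_staircase i j l) [0..<n])"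
proof (rule ascent_seq_map_uptI)
  fix p assume p: "1 \<le> p" "p < n"
  show "spiked_staircase i j l p \<le> 1 + asc (map (spiked_staircase i j l) [0..<p])"
  proof (cases "p \<le> i + 1 + l - j")
    case False
    define s where "s = i + 1 + l - j"
    define e where "e = min (p - 1) l"
    have "card (insert i {s..<e}) \<le> asc (map (spiked_staircase i j l) [0..<p])"
      by (rule card_le_asc_map_upt) (use assms False in \<open>auto simp: spiked_staircase_def s_def e_def\<close>)
    moreover have "i < s" using assms unfolding s_def by simp
    then have "card (insert i {s..<e}) = Suc (e - s)" by simp
    ultimately show ?thesis
      using False assms unfolding s_def e_def by (auto simp: spiked_staircase_def)
  qed (simp add: spiked_staircase_def)
qed (use assms in \<open>auto simp: spiked_staircase_def\<close>)

lemma asc_spiked_staircase_le: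
  assumes "Suc i < j" "j < l" "l < n"
  shows "asc (map (spiked_staircase i j l) [0..<n]) \<le> j - i"
proof -
  have "asc (map (spiked_staircase i j l) [0..<n]) \<le> card (insert i {i + 1 + l - j..<l})"
    by (rule asc_map_upt_le_card) (use assms in \<open>auto simp: spiked_staircase_def split: if_splits\<close>)
  also have "\<dots> = j - i"
    using assms by simp
  finally show ?thesis .
qed

lemma spiked_staircase_top: "Suc i < j \<Longrightarrow> j < l \<Longrightarrow> l \<le> p \<Longrightarrow> spiked_staircase i j l p = j - i"
  by (simp add: spiked_staircase_def)

lemma spiked_staircase_eq_imp_eq:
  assumes "Suc i < j" "j < l" "l < n" "Suc i < j'" "j' < l'" "l' < n"
    and eq: "\<And>p. p < n \<Longrightarrow> spiked_staircase i j l p = spiked_staircase i j' l' p"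
  shows "j = j' \<and> l = l'"
proof -
  have "spiked_staircase i j l (n - 1) = j - i" "spiked_staircase i j' l' (n - 1) = j' - i"
    using assms(1-6) by (simp_all add: spiked_staircase_top)
  then have "j = j'"
    using eq[of "n - 1"] assms(1,4,6) by simp
  moreover have "l = l'"
  proof (rule ccontr)
    have gap: "spiked_staircase i j a (i + 2 + a - j) = 2" "spiked_staircase i j b (i + 2 + a - j) = 0"
      if "j < a" "a < b" for a b
      using that assms(1) by (auto simp: spiked_staircase_def)
    assume "l \<noteq> l'"
    then show False
      using gap[of l l'] gap[of l' l] eq[of "i + 2 + min l l' - j"] assms \<open>j = j'\<close>
      by (cases "l < l'") (simp_all add: min_def)
  qed
  ultimately show ?thesis ..
qed

abbreviation P3 :: "nat list set" where
  "P3 \<equiv> {[0,1,0,1], [0,1,1,2], [0,1,2,0], [0,1,2,1]}"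

context
  fixes i j l :: nat
  assumes ij: "Suc i < j" and jl: "j < l"
begin

lemma spiked_staircase_eq_1_iff: "spiked_staircase i j l p = 1 \<longleftrightarrow> p = Suc i"
  using ij jl by (auto simp: spiked_staircase_def)

lemma spiked_staircase_repeat_around:
  assumes "p < r" "r < q" "spiked_staircase i j l p = spiked_staircase i j l q"
    "spiked_staircase i j l p < spiked_staircase i j l r"
  shows "spiked_staircase i j l p = 0 \<and> r = Suc i"
  using ij jl assms by (auto simp: spiked_staircase_def split: if_splits)

lemma spiked_staircase_repeat_before:
  assumes "p < q" "q < r" "spiked_staircase i j l p = spiked_staircase i j l q"
    "spiked_staircase i j l p < spiked_staircase i j l r"
  shows "spiked_staircase i j l p = 0"
  using ij jl assms by (auto simp: spiked_staircase_def split: if_splits)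

lemma spiked_staircase_avoids_P3: "\<forall>p\<in>P3. avoids (map (spiked_staircase i j l) [0..<n]) p"
proof -
  let ?g = "spiked_staircase i j l"
  have "avoids (map ?g [0..<n]) [0,1,0,1]"
  proof (rule avoids_0101I)
    fix i1 i2 i3 i4
    assume "i1 < i2" "i2 < i3" "i3 < i4" "?g i1 < ?g i2" "?g i3 = ?g i1" "?g i4 = ?g i2"
    then show False
      using spiked_staircase_repeat_around[of i1 i2 i3] spiked_staircase_eq_1_iff[of i2]
        spiked_staircase_eq_1_iff[of i4] by auto
  qed
  moreover have "avoids (map ?g [0..<n]) [0,1,1,2]"
  proof (rule avoids_0112I)
    fix i1 i2 i3 i4
    assume "i1 < i2" "i2 < i3" "i3 < i4" "?g i1 < ?g i2" "?g i3 = ?g i2" "?g i2 < ?g i4"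
    then show False
      using spiked_staircase_repeat_before[of i2 i3 i4] by auto
  qed
  moreover have "avoids (map ?g [0..<n]) [0,1,2,0]"
  proof (rule avoids_0120I)
    fix i1 i2 i3 i4
    assume "i1 < i2" "i2 < i3" "i3 < i4" "?g i1 < ?g i2" "?g i2 < ?g i3" "?g i4 = ?g i1"
    then show False
      using spiked_staircase_repeat_around[of i1 i2 i4] spiked_staircase_repeat_around[of i1 i3 i4]
      by auto
  qed
  moreover have "avoids (map ?g [0..<n]) [0,1,2,1]"
  proof (rule avoids_0121I)
    fix i1 i2 i3 i4
    assume "i1 < i2" "i2 < i3" "i3 < i4" "?g i1 < ?g i2" "?g i2 < ?g i3" "?g i4 = ?g i2"
    then show False
      using spiked_staircase_repeat_around[of i2 i3 i4] by auto
  qed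
  ultimately show ?thesis by auto
qed

end

definition staircase_or_spiked :: "nat \<Rightarrow> nat \<Rightarrow> nat \<Rightarrow> nat \<Rightarrow> nat \<Rightarrow> nat" where
  "staircase_or_spiked n i j l =
    (if l = n \<or> j = Suc i then staircase i j l 0 else spiked_staircase i j l)"

lemma staircase_or_spiked_top: "staircase_or_spiked n i j n = staircase i j n 0"
  by (simp add: staircase_or_spiked_def)

lemma staircase_or_spiked_low: "p \<le> i \<Longrightarrow> staircase_or_spiked n i j l p = 0"
  by (simp add: staircase_or_spiked_def staircase_def spiked_staircase_def)

lemma staircase_or_spiked_Suc: "i < j \<Longrightarrow> j < l \<Longrightarrow> staircase_or_spiked n i j l (Suc i) = 1"
  by (simp add: staircase_or_spiked_def staircase_def spiked_staircase_def)

lemma staircase_neq_spiked_staircase: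
  assumes "i < j" "j < l" "l \<le> n" "l = n \<or> j = Suc i" "Suc i < j'" "j' < l'" "l' < n"
  obtains p where "p < n" "staircase i j l 0 p \<noteq> spiked_staircase i j' l' p"
proof (cases "j = Suc i")
  case True
  have "staircase i j l 0 (n - 1) \<le> 1" "spiked_staircase i j' l' (n - 1) = j' - i"
    using assms True by (auto simp: staircase_def spiked_staircase_def)
  with assms show thesis by (intro that[of "n - 1"]) auto
next
  case False
  have "staircase i j l 0 (i + 2) = 2" "spiked_staircase i j' l' (i + 2) = 0"
    using assms False by (auto simp: staircase_def spiked_staircase_def)
  with assms show thesis by (intro that[of "i + 2"]) auto
qed

lemma staircase_or_spiked_eq_imp_eq:
  assumes t: "(i, j, l) \<in> triples n" and t': "(i', j', l') \<in> triples n"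
    and eq: "\<And>p. p < n \<Longrightarrow> staircase_or_spiked n i j l p = staircase_or_spiked n i' j' l' p"
  shows "(i, j, l) = (i', j', l')"
proof -
  have o: "i < j" "j < l" "l \<le> n" "i' < j'" "j' < l'" "l' \<le> n"
    using t t' by (auto simp: triples_def)
  have "i = i'"
    using eq[of "Suc i"] eq[of "Suc i'"] o staircase_or_spiked_low staircase_or_spiked_Suc
    by (metis Suc_leI le_less_trans less_le_trans linorder_neqE_nat zero_neq_one)
  show ?thesis
  proof (cases "l = n \<or> j = Suc i"; cases "l' = n \<or> j' = Suc i'")
    assume "l = n \<or> j = Suc i" "l' = n \<or> j' = Suc i'"
    then show ?thesis
      using staircase_eq_imp_eq[OF t t', of 0 0] eq o by (simp add: staircase_or_spiked_def)
  next
    assume "l = n \<or> j = Suc i" "\<not> (l' = n \<or> j' = Suc i')"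
    then show ?thesis
      using staircase_neq_spiked_staircase[of i j l n j' l'] eq o \<open>i = i'\<close>
      by (auto simp: staircase_or_spiked_def)
  next
    assume "\<not> (l = n \<or> j = Suc i)" "l' = n \<or> j' = Suc i'"
    then show ?thesis
      using staircase_neq_spiked_staircase[of i j' l' n j l] eq o \<open>i = i'\<close>
      by (fastforce simp: staircase_or_spiked_def)
  next
    assume "\<not> (l = n \<or> j = Suc i)" "\<not> (l' = n \<or> j' = Suc i')"
    then show ?thesis
      using spiked_staircase_eq_imp_eq[of i j l n j' l'] eq o \<open>i = i'\<close>
      by (simp add: staircase_or_spiked_def)
  qed
qed

lemma staircase_avoids_P3:
  assumes "i < j" "j < l" "l = n \<or> j = Suc i"
  shows "\<forall>p\<in>P3. avoids (map (staircase i j l 0) [0..<n]) p"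
proof -
  have "avoids (map (staircase i j l 0) [0..<n]) [0,1,0,1]"
    by (rule avoids_0101I) (use assms in \<open>auto simp: staircase_def min_def split: if_splits\<close>)
  moreover have "avoids (map (staircase i j l 0) [0..<n]) [0,1,1,2]"
    by (rule avoids_0112I) (use assms in \<open>auto simp: staircase_def min_def split: if_splits\<close>)
  moreover have "avoids (map (staircase i j l 0) [0..<n]) [0,1,2,0]"
    by (rule avoids_0120I) (use assms in \<open>auto simp: staircase_def min_def split: if_splits\<close>)
  moreover have "avoids (map (staircase i j l 0) [0..<n]) [0,1,2,1]"
    by (rule avoids_0121I) (use assms in \<open>auto simp: staircase_def min_def split: if_splits\<close>)
  ultimately show ?thesis by auto
qed

lemma staircase_or_spiked_mem_avoiders:
  assumes "(i, j, l) \<in> triples n"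
  shows "map (staircase_or_spiked n i j l) [0..<n] \<in> avoiders P3 n"
proof -
  have o: "i < j" "j < l" "l \<le> n" using assms by (auto simp: triples_def)
  show ?thesis
  proof (cases "l = n \<or> j = Suc i")
    case True
    then show ?thesis
      using ascent_seq_staircase[OF o, of 0] staircase_avoids_P3[OF o(1,2) True]
      by (simp add: avoiders_def staircase_or_spiked_def)
  next
    case False
    then have "Suc i < j" "l < n" using o by auto
    then show ?thesis
      using False ascent_seq_spiked_staircase[of i j l n] spiked_staircase_avoids_P3[of i j l n] o
      by (simp add: avoiders_def staircase_or_spiked_def)
  qed
qed

lemma staircase_top_snoc_mem_family:
  assumes o: "i < j" "j < n"
    and v: "v \<le> 1 + asc (map (staircase i j n 0) [0..<n])"
    and avoid: "\<forall>p\<in>P3. avoids (map (staircase i j n 0) [0..<n] @ [v]) p"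
  shows "map (staircase i j n 0) [0..<n] @ [v] \<in> family staircase_or_spiked (Suc n)"
    (is "?x @ [v] \<in> _")
proof -
  note extend = snoc_mem_family[where s = staircase_or_spiked and f = "staircase i j n 0" and v = v]
  have nc: "\<not> contains (?x @ [v]) p" if "p \<in> P3" for p
    using avoid that unfolding avoids_def by auto
  have "asc ?x \<le> j - i" by (rule asc_staircase_le) (use o in auto)
  with v consider "v = j - i + 1" "n = j + 1" | "v = j - i + 1" "n \<noteq> j + 1" | "v = j - i"
    | "v = 0" "j = Suc i" | "v = 0" "j \<noteq> Suc i" | "0 < v" "v < j - i"
    by linarith
  then show ?thesis
  proof cases
    case 1
    show ?thesis
      by (rule extend[of i "j + 1" "Suc n"])
        (use o 1 in \<open>auto simp: triples_def staircase_or_spiked_def staircase_def\<close>)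
  next
    case 2
    have "contains (?x @ [v]) [0,1,1,2]"
      by (rule contains_snoc_0112I[of i j "j + 1"]) (use o 2 in \<open>auto simp: staircase_def\<close>)
    with nc show ?thesis by auto
  next
    case 3
    show ?thesis
      by (rule extend[of i j "Suc n"])
        (use o 3 in \<open>auto simp: triples_def staircase_or_spiked_def staircase_def\<close>)
  next
    case 4
    show ?thesis
      by (rule extend[of i j n])
        (use o 4 in \<open>auto simp: triples_def staircase_or_spiked_def staircase_def\<close>)
  next
    case 5
    have "contains (?x @ [v]) [0,1,2,0]"
      by (rule contains_snoc_0120I[of i "Suc i" j]) (use o 5 in \<open>auto simp: staircase_def\<close>)
    with nc show ?thesis by auto
  next
    case 6
    have "contains (?x @ [v]) [0,1,2,1]"
      by (rule contains_snoc_0121I[of i "i + v" j]) (use o 6 in \<open>auto simp: staircase_def\<close>)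
    with nc show ?thesis by auto
  qed
qed

lemma staircase_step_snoc_mem_family:
  assumes o: "Suc i < l" "l < n"
    and v: "v \<le> 1 + asc (map (staircase i (Suc i) l 0) [0..<n])"
    and avoid: "\<forall>p\<in>P3. avoids (map (staircase i (Suc i) l 0) [0..<n] @ [v]) p"
  shows "map (staircase i (Suc i) l 0) [0..<n] @ [v] \<in> family staircase_or_spiked (Suc n)"
    (is "?x @ [v] \<in> _")
proof -
  note extend = snoc_mem_family[where s = staircase_or_spiked and f = "staircase i (Suc i) l 0" and v = v]
  have nc: "\<not> contains (?x @ [v]) p" if "p \<in> P3" for p
    using avoid that unfolding avoids_def by auto
  have "asc ?x \<le> 1" using asc_staircase_le[of i "Suc i" l n 0] o by simp
  with v consider "v = 0" | "v = 1" | "v = 2" "l = Suc (Suc i)" | "v = 2" "l \<noteq> Suc (Suc i)"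
    by linarith
  then show ?thesis
  proof cases
    case 1
    show ?thesis
      by (rule extend[of i "Suc i" l])
        (use o 1 in \<open>auto simp: triples_def staircase_or_spiked_def staircase_def\<close>)
  next
    case 2
    have "contains (?x @ [v]) [0,1,0,1]"
      by (rule contains_snoc_0101I[of i "Suc i" "n - 1"]) (use o 2 in \<open>auto simp: staircase_def\<close>)
    with nc show ?thesis by auto
  next
    case 3
    show ?thesis
      by (rule extend[of i l n])
        (use o 3 in \<open>auto simp: triples_def staircase_or_spiked_def staircase_def spiked_staircase_def\<close>)
  next
    case 4
    have "contains (?x @ [v]) [0,1,1,2]"
      by (rule contains_snoc_0112I[of i "Suc i" "Suc (Suc i)"]) (use o 4 in \<open>auto simp: staircase_def\<close>)
    with nc show ?thesis by auto
  qed
qed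

lemma spiked_staircase_snoc_mem_family:
  assumes o: "Suc i < j" "j < l" "l < n"
    and v: "v \<le> 1 + asc (map (spiked_staircase i j l) [0..<n])"
    and avoid: "\<forall>p\<in>P3. avoids (map (spiked_staircase i j l) [0..<n] @ [v]) p"
  shows "map (spiked_staircase i j l) [0..<n] @ [v] \<in> family staircase_or_spiked (Suc n)"
    (is "?x @ [v] \<in> _")
proof -
  note extend = snoc_mem_family[where s = staircase_or_spiked and f = "spiked_staircase i j l" and v = v]
  have nc: "\<not> contains (?x @ [v]) p" if "p \<in> P3" for p
    using avoid that unfolding avoids_def by auto
  have "asc ?x \<le> j - i" by (rule asc_spiked_staircase_le[OF o])
  with v consider "v = j - i + 1" "l = n - 1" | "v = j - i + 1" "l \<noteq> n - 1" | "v = j - i"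
    | "v = 0" | "v = 1" | "2 \<le> v" "v < j - i"
    by linarith
  then show ?thesis
  proof cases
    case 1
    show ?thesis
      by (rule extend[of i "j + 1" n])
        (use o 1 in \<open>auto simp: triples_def staircase_or_spiked_def spiked_staircase_def\<close>)
  next
    case 2
    have "contains (?x @ [v]) [0,1,1,2]"
      by (rule contains_snoc_0112I[of i l "l + 1"]) (use o 2 in \<open>auto simp: spiked_staircase_def\<close>)
    with nc show ?thesis by auto
  next
    case 3
    show ?thesis
      by (rule extend[of i j l])
        (use o 3 in \<open>auto simp: triples_def staircase_or_spiked_def spiked_staircase_def\<close>)
  next
    case 4
    have "contains (?x @ [v]) [0,1,2,0]"
      by (rule contains_snoc_0120I[of i "Suc i" l]) (use o 4 in \<open>auto simp: spiked_staircase_def\<close>)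
    with nc show ?thesis by auto
  next
    case 5
    have "contains (?x @ [v]) [0,1,2,1]"
      by (rule contains_snoc_0121I[of i "Suc i" l]) (use o 5 in \<open>auto simp: spiked_staircase_def\<close>)
    with nc show ?thesis by auto
  next
    case 6
    have "contains (?x @ [v]) [0,1,2,1]"
      by (rule contains_snoc_0121I[of i "v + i + l - j" l]) (use o 6 in \<open>auto simp: spiked_staircase_def\<close>)
    with nc show ?thesis by auto
  qed
qed

lemma staircase_or_spiked_snoc_mem_family:
  assumes "(i, j, l) \<in> triples n"
    and "v \<le> 1 + asc (map (staircase_or_spiked n i j l) [0..<n])"
    and "\<forall>p\<in>P3. avoids (map (staircase_or_spiked n i j l) [0..<n] @ [v]) p"
  shows "map (staircase_or_spiked n i j l) [0..<n] @ [v] \<in> family staircase_or_spiked (Suc n)"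
proof -
  have o: "i < j" "j < l" "l \<le> n" using assms(1) by (auto simp: triples_def)
  consider "l = n" | "l < n" "j = Suc i" | "l < n" "Suc i < j" using o by linarith
  then show ?thesis
  proof cases
    case 1
    then show ?thesis
      using staircase_top_snoc_mem_family[of i j n v] assms(2,3) o
      by (simp add: staircase_or_spiked_def)
  next
    case 2
    then show ?thesis
      using staircase_step_snoc_mem_family[of i l n v] assms(2,3) o
      by (simp add: staircase_or_spiked_def)
  next
    case 3
    then show ?thesis
      using spiked_staircase_snoc_mem_family[of i j l n v] assms(2,3) o
      by (simp add: staircase_or_spiked_def)
  qed
qed

lemma a_P_P1: "1 \<le> n \<Longrightarrow> a_P P1 n = 1 + ((n + 1) choose 3)"
proof (rule a_P_eq_by_family[where s = "\<lambda>_ i j l. staircase i j l (j - i - 1)"])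
  show "(i, j, l) = (i', j', l')"
    if "(i, j, l) \<in> triples n" "(i', j', l') \<in> triples n"
      "\<And>p. p < n \<Longrightarrow> staircase i j l (j - i - 1) p = staircase i' j' l' (j' - i' - 1) p"
    for n i j l i' j' l'
    by (rule staircase_eq_imp_eq[OF that(1,2)]) (use that in \<open>auto simp: triples_def\<close>)
qed (blast intro: staircase_pred_mem_avoiders staircase_pred_snoc_mem_family map_staircase_first_step
  | force simp: staircase_Suc triples_def)+

lemma a_P_P2: "1 \<le> n \<Longrightarrow> a_P P2 n = 1 + ((n + 1) choose 3)"
proof (rule a_P_eq_by_family[where s = "\<lambda>_ i j l. staircase i j l 0"])
  show "(i, j, l) = (i', j', l')"
    if "(i, j, l) \<in> triples n" "(i', j', l') \<in> triples n"
      "\<And>p. p < n \<Longrightarrow> staircase i j l 0 p = staircase i' j' l' 0 p"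
    for n i j l i' j' l'
    by (rule staircase_eq_imp_eq[OF that(1,2)]) (use that in \<open>auto simp: triples_def\<close>)
qed (blast intro: staircase_zero_mem_avoiders staircase_zero_snoc_mem_family map_staircase_first_step
  | force simp: staircase_Suc triples_def)+

lemma a_P_P3: "1 \<le> n \<Longrightarrow> a_P P3 n = 1 + ((n + 1) choose 3)"
proof (rule a_P_eq_by_family[where s = staircase_or_spiked])
  show "map (staircase_or_spiked (Suc m) (m - 1) m (Suc m)) [0..<Suc m] = replicate m 0 @ [1]"
    if "1 \<le> m" for m
    unfolding staircase_or_spiked_top using that by (rule map_staircase_first_step)
  show "(i, j, l) = (i', j', l')"
    if "(i, j, l) \<in> triples m" "(i', j', l') \<in> triples m"
      "\<And>p. p < m \<Longrightarrow> staircase_or_spiked m i j l p = staircase_or_spiked m i' j' l' p"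
    for m i j l i' j' l'
    using that by (rule staircase_or_spiked_eq_imp_eq)
qed (blast intro: staircase_or_spiked_mem_avoiders staircase_or_spiked_snoc_mem_family
  | force simp: staircase_or_spiked_Suc triples_def)+

theorem theorem5p1:
  fixes n :: nat
  assumes "n \<ge> 1"
  shows "a_P {[0,1,0,1], [0,1,0,2], [0,1,1,2], [0,1,2,0]} n = 1 + ((n + 1) choose 3) \<and>
         a_P {[0,1,0,1], [0,1,0,2], [0,1,1,2], [0,1,2,1]} n = 1 + ((n + 1) choose 3) \<and>
         a_P {[0,1,0,1], [0,1,1,2], [0,1,2,0], [0,1,2,1]} n = 1 + ((n + 1) choose 3)"
  using a_P_P1[OF assms] a_P_P2[OF assms] a_P_P3[OF assms] by blast

end
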